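(* Consider the full binary tree network with levels $0,1,\dots,9$ (root at level $0$, $512$ leaves at level $9$, $N=2^{10}-1$ nodes), in which every node at level $s<9$ owes $\$2^{10-s}$ to each of its two children, leaves owe nothing, and $\mathbf e=\mathbf 0$. For a cash injection $\mathbf c\ge \mathbf 0$, let $N_d(\mathbf c)$ be the number of nodes $i$ with $p_i<\bar p_i$, where $\mathbf p$ is the clearing payment vector. Then: if $C\ge 2048$, the minimum of $N_d(\mathbf c)$ over $\mathbf c\ge\mathbf 0$ with $\mathbf 1^T\mathbf c=C$ is $0$; and if $C$ is an integer with $0\le C<2048$ with binary expansion $C=\sum_{u\ge 0} b(u)2^u$, $b(u)\in\{0,1\}$, this minimum equals \[ 511-\sum_{u= 3}^{10} b(u)\,(2^{u-2}-1). \]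
   Context: Financial network model: $L_{ij}\ge 0$ is the amount node $i$ owes node $j$; $\bar p_i=\sum_j L_{ij}$; $\Pi_{ij}=L_{ij}/\bar p_i$ if $\bar p_i\ne0$, else $0$. Given cash on hand $\mathbf e$ and injection $\mathbf c$, the clearing payment vector is the (here unique) $\mathbf p$ with $\mathbf p=\min(\bar{\mathbf p},\Pi^T\mathbf p+\mathbf e+\mathbf c)$ componentwise: each node pays its liabilities in full if its funds (received payments plus $e_i+c_i$) suffice, otherwise pays all its funds, split among creditors in proportion to amounts owed. A node $i$ is in default if $p_i<\bar p_i$. *)

theory Defs
  imports Complex_Main
begin

text \<open>Nodes form a finite set V; L i j is the amount node i owes node j.\<close>

definition pbar :: "'a set \<Rightarrow> ('a \<Rightarrow> 'a \<Rightarrow> real) \<Rightarrow> 'a \<Rightarrow> real" where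
  "pbar V L i = (\<Sum>j\<in>V. L i j)"

definition relliab :: "'a set \<Rightarrow> ('a \<Rightarrow> 'a \<Rightarrow> real) \<Rightarrow> 'a \<Rightarrow> 'a \<Rightarrow> real" where
  "relliab V L i j = (if pbar V L i \<noteq> 0 then L i j / pbar V L i else 0)"

definition is_clearing ::
  "'a set \<Rightarrow> ('a \<Rightarrow> 'a \<Rightarrow> real) \<Rightarrow> ('a \<Rightarrow> real) \<Rightarrow> ('a \<Rightarrow> real) \<Rightarrow> ('a \<Rightarrow> real) \<Rightarrow> bool" where
  "is_clearing V L e c p \<longleftrightarrow>
     (\<forall>i\<in>V. p i = min (pbar V L i) ((\<Sum>j\<in>V. relliab V L j i * p j) + e i + c i)) \<and>
     (\<forall>i. i \<notin> V \<longrightarrow> p i = 0)"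

definition clearing_vector ::
  "'a set \<Rightarrow> ('a \<Rightarrow> 'a \<Rightarrow> real) \<Rightarrow> ('a \<Rightarrow> real) \<Rightarrow> ('a \<Rightarrow> real) \<Rightarrow> 'a \<Rightarrow> real" where
  "clearing_vector V L e c = (THE p. is_clearing V L e c p)"

definition num_defaults ::
  "'a set \<Rightarrow> ('a \<Rightarrow> 'a \<Rightarrow> real) \<Rightarrow> ('a \<Rightarrow> real) \<Rightarrow> ('a \<Rightarrow> real) \<Rightarrow> nat" where
  "num_defaults V L e c =
     card {i\<in>V. clearing_vector V L e c i < pbar V L i}"

text \<open>Heap indexing: nodes 1..1023, root 1, children of i are 2i and 2i+1;
  node i is at level s iff 2^s \<le> i < 2^(s+1).\<close>

definition tree_nodes :: "nat set" where
  "tree_nodes = {1..1023}"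

definition level :: "nat \<Rightarrow> nat" where
  "level i = (THE s. 2^s \<le> i \<and> i < 2^(Suc s))"

definition tree_L :: "nat \<Rightarrow> nat \<Rightarrow> real" where
  "tree_L i j = (if i \<in> tree_nodes \<and> level i < 9 \<and> (j = 2*i \<or> j = 2*i+1)
                 then 2 ^ (10 - level i) else 0)"

definition tree_Nd :: "(nat \<Rightarrow> real) \<Rightarrow> nat" where
  "tree_Nd c = num_defaults tree_nodes tree_L (\<lambda>_. 0) c"

definition admissible_injections :: "real \<Rightarrow> (nat \<Rightarrow> real) set" where
  "admissible_injections C =
     {c. (\<forall>i\<in>tree_nodes. c i \<ge> 0) \<and> (\<Sum>i\<in>tree_nodes. c i) = C}"

definition min_defaults_is :: "real \<Rightarrow> nat \<Rightarrow> bool" where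
  "min_defaults_is C m \<longleftrightarrow>
     (\<exists>c\<in>admissible_injections C. tree_Nd c = m) \<and>
     (\<forall>c\<in>admissible_injections C. m \<le> tree_Nd c)"

end

theory Submission
  imports Defs "HOL-Library.Discrete_Functions"
begin

(* In the tree with heap indexing (root 1, children 2i and 2i+1) the clearing vector is
   computed top-down: node i pays min(pbar i, p(parent)/2 + c i), and an internal node
   that lies n+1 levels above the leaves owes 2^(n+3) in total.  A leaf owes nothing and
   never defaults, so N_d(c) = 511 minus the number of solvent internal nodes.

   The key quantity is capacity m = 2m - popcount m, the number of nodes of the best
   forest of complete subtrees fundable with 8m dollars (binary digit 2^k of m pays for a
   complete subtree of 2^(k+1) - 1 nodes).  It is superadditive, which drives both bounds:
   - lower bound: by induction over subtrees, the solvent nodes of a subtree number at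
     most capacity(floor((inflow + injections)/8)) (lemma num_solvent_upper_bound);
   - achievability: a recursive allocation fund n i m splits the budget 8m between the
     two subtrees along the binary digits of m and attains capacity m
     (lemma fund_makes_solvent). *)

fun popcount :: "nat \<Rightarrow> nat" where
  "popcount n = (if n = 0 then 0 else n mod 2 + popcount (n div 2))"

declare popcount.simps [simp del]

lemma popcount_0 [simp]: "popcount 0 = 0"
  by (simp add: popcount.simps)

lemma popcount_rec: "popcount n = n mod 2 + popcount (n div 2)"
  by (cases "n = 0") (simp, subst popcount.simps, simp)

lemma popcount_double_plus: "b < 2 \<Longrightarrow> popcount (2 * a + b) = b + popcount a"
  using popcount_rec[of "2 * a + b"] by simp

lemma popcount_Suc_le: "popcount (Suc n) \<le> Suc (popcount n)"
proof (induction n rule: less_induct)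
  case (less n)
  show ?case
  proof (cases "even n")
    case True
    then have "Suc n = 2 * (n div 2) + 1" by simp
    then show ?thesis
      using popcount_double_plus[of 1 "n div 2"] popcount_rec[of n] True by simp
  next
    case False
    then have n: "Suc n = 2 * Suc (n div 2) + 0" and "n div 2 < n" by auto presburger
    have "popcount (Suc n) = popcount (Suc (n div 2))"
      unfolding n by (subst popcount_double_plus) simp_all
    also have "\<dots> \<le> Suc (popcount (n div 2))" using less \<open>n div 2 < n\<close> by blast
    also have "\<dots> = popcount n" using popcount_rec[of n] False by (simp add: odd_iff_mod_2_eq_one)
    finally show ?thesis by simp
  qed
qed

text \<open>Popcount is subadditive: adding in binary can only lose bits through carries.\<close>
lemma popcount_add: "popcount (a + b) \<le> popcount a + popcount b"
proof (induction b arbitrary: a rule: less_induct)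
  case (less b)
  show ?case
  proof (cases "b = 0")
    case False
    define a' \<alpha> b' \<beta> where "a' = a div 2" and "\<alpha> = a mod 2" and "b' = b div 2" and "\<beta> = b mod 2"
    have a: "a = 2 * a' + \<alpha>" and b: "b = 2 * b' + \<beta>" and "\<alpha> < 2" "\<beta> < 2"
      unfolding a'_def \<alpha>_def b'_def \<beta>_def by simp_all
    have "b' < b" using False by (simp add: b'_def)
    then have IH: "popcount (a' + b') \<le> popcount a' + popcount b'" by (rule less)
    have pa: "popcount a = \<alpha> + popcount a'" and pb: "popcount b = \<beta> + popcount b'"
      unfolding a'_def \<alpha>_def b'_def \<beta>_def by (rule popcount_rec)+
    show ?thesis
    proof (cases "\<alpha> + \<beta> < 2")
      case True
      have "a + b = 2 * (a' + b') + (\<alpha> + \<beta>)" using a b by simp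
      then have "popcount (a + b) = \<alpha> + \<beta> + popcount (a' + b')"
        using popcount_double_plus[OF True] by metis
      then show ?thesis using IH pa pb by simp
    next
      case carry: False
      then have sum: "a + b = 2 * Suc (a' + b') + 0" using a b \<open>\<alpha> < 2\<close> \<open>\<beta> < 2\<close> by simp
      have "popcount (a + b) = 0 + popcount (Suc (a' + b'))"
        unfolding sum by (rule popcount_double_plus) simp
      also have "\<dots> \<le> Suc (popcount (a' + b'))" using popcount_Suc_le by simp
      also have "\<dots> \<le> Suc (popcount a' + popcount b')" using IH by simp
      finally show ?thesis using pa pb carry by simp
    qed
  qed simp
qed

lemma popcount_pow_plus: "r < 2 ^ k \<Longrightarrow> popcount (2 ^ k + r) = Suc (popcount r)"
proof (induction k arbitrary: r)
  case (Suc k)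
  have split: "2 ^ Suc k + r = 2 * (2 ^ k + r div 2) + r mod 2" by simp
  have "popcount (2 ^ Suc k + r) = r mod 2 + popcount (2 ^ k + r div 2)"
    unfolding split by (rule popcount_double_plus) simp
  moreover have "r div 2 < 2 ^ k" using Suc.prems by simp
  ultimately show ?case using Suc.IH popcount_rec[of r] by simp
qed (simp add: popcount.simps)

lemma popcount_le: "popcount n \<le> n"
proof (induction n rule: less_induct)
  case (less n)
  show ?case
  proof (cases "n = 0")
    case False
    then have "popcount (n div 2) \<le> n div 2" using less by simp
    then show ?thesis using popcount_rec[of n] by linarith
  qed simp
qed

text \<open>capacity m is the number of internal nodes that a budget of 8m can make solvent:
  a complete subtree with 2^k leaves of its bottom internal level costs 8 * 2^k and has
  2^(k+1) - 1 nodes, and m is spent digit by digit.\<close>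
definition capacity :: "nat \<Rightarrow> int" where
  "capacity m = 2 * int m - int (popcount m)"

lemma capacity_0 [simp]: "capacity 0 = 0"
  by (simp add: capacity_def)

lemma capacity_nonneg: "0 \<le> capacity m"
  using popcount_le[of m] by (simp add: capacity_def)

lemma capacity_superadd: "capacity a + capacity b \<le> capacity (a + b)"
  using popcount_add[of a b] by (simp add: capacity_def)

lemma capacity_mono: assumes "a \<le> b" shows "capacity a \<le> capacity b"
proof -
  obtain d where "b = a + d" using assms le_Suc_ex by blast
  then show ?thesis using capacity_superadd[of a d] capacity_nonneg[of d] by simp
qed

lemma capacity_pow: "capacity (2 ^ n) = 2 * 2 ^ n - 1"
  using popcount_pow_plus[of 0 n] by (simp add: capacity_def)

lemma capacity_pow_plus: "r < 2 ^ k \<Longrightarrow> capacity (2 ^ k + r) = capacity (2 ^ k) + capacity r"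
  using popcount_pow_plus[of r k] popcount_pow_plus[of 0 k] by (simp add: capacity_def)

text \<open>A budget m below 2^n splits between two subtrees of height n - 1 without losing
  capacity: the left one receives the leading digit (or everything), the right one the rest.\<close>
lemma capacity_split:
  assumes "m < 2 ^ n"
  defines "m\<^sub>1 \<equiv> min m (2 ^ n div 2)"
  shows "capacity m = capacity m\<^sub>1 + capacity (m - m\<^sub>1)" and "2 * m\<^sub>1 \<le> 2 ^ n" and "2 * (m - m\<^sub>1) \<le> 2 ^ n"
proof -
  show "2 * m\<^sub>1 \<le> 2 ^ n" by (auto simp: m\<^sub>1_def)
  have "capacity m = capacity m\<^sub>1 + capacity (m - m\<^sub>1) \<and> 2 * (m - m\<^sub>1) \<le> 2 ^ n"
  proof (cases "m \<le> 2 ^ n div 2")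
    case True
    then show ?thesis by (simp add: m\<^sub>1_def)
  next
    case False
    then obtain k where n: "n = Suc k" using assms by (cases n) auto
    then have "m\<^sub>1 = 2 ^ k" and "m = 2 ^ k + (m - m\<^sub>1)" and "m - m\<^sub>1 < 2 ^ k"
      using False assms by (auto simp: m\<^sub>1_def)
    then show ?thesis using capacity_pow_plus[of "m - m\<^sub>1" k] n by simp
  qed
  then show "capacity m = capacity m\<^sub>1 + capacity (m - m\<^sub>1)" and "2 * (m - m\<^sub>1) \<le> 2 ^ n" by auto
qed

lemma binary_expansion: "m < 2 ^ n \<Longrightarrow> (\<Sum>k<n. int (m div 2 ^ k mod 2) * 2 ^ k) = int m"
proof (induction n arbitrary: m)
  case (Suc n)
  have "(\<Sum>k<n. int (m div 2 ^ Suc k mod 2) * 2 ^ Suc k)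
        = 2 * (\<Sum>k<n. int (m div 2 div 2 ^ k mod 2) * 2 ^ k)"
    by (simp add: div_mult2_eq sum_distrib_left mult_ac)
  also have "\<dots> = 2 * int (m div 2)" using Suc by simp
  moreover have "int m = int (m mod 2) + 2 * int (m div 2)"
    by (metis mod_mult_div_eq of_nat_add of_nat_mult of_nat_numeral)
  ultimately show ?case unfolding sum.lessThan_Suc_shift by simp
qed simp

lemma binary_popcount: "m < 2 ^ n \<Longrightarrow> (\<Sum>k<n. int (m div 2 ^ k mod 2)) = int (popcount m)"
proof (induction n arbitrary: m)
  case (Suc n)
  have "(\<Sum>k<n. int (m div 2 ^ Suc k mod 2)) = int (popcount (m div 2))"
    using Suc by (simp add: div_mult2_eq)
  then show ?case unfolding sum.lessThan_Suc_shift using popcount_rec[of m] by simp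
qed simp

lemma capacity_binary:
  assumes "m < 2 ^ n"
  shows "(\<Sum>k<n. int (m div 2 ^ k mod 2) * (2 ^ (k + 1) - 1)) = capacity m"
proof -
  have "(\<Sum>k<n. int (m div 2 ^ k mod 2) * (2 ^ (k + 1) - 1))
        = 2 * (\<Sum>k<n. int (m div 2 ^ k mod 2) * 2 ^ k) - (\<Sum>k<n. int (m div 2 ^ k mod 2))"
    by (simp add: sum_distrib_left sum_subtractf algebra_simps)
  then show ?thesis
    using binary_expansion[OF assms] binary_popcount[OF assms] by (simp add: capacity_def)
qed

definition real_capacity :: "real \<Rightarrow> int" where
  "real_capacity x = capacity (nat \<lfloor>x / 8\<rfloor>)"

lemma real_capacity_nonneg: "0 \<le> real_capacity x"
  by (simp add: real_capacity_def capacity_nonneg)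

lemma real_capacity_mono: "x \<le> y \<Longrightarrow> real_capacity x \<le> real_capacity y"
  unfolding real_capacity_def by (intro capacity_mono nat_mono floor_mono divide_right_mono) simp_all

lemma real_capacity_superadd:
  assumes "0 \<le> x" "0 \<le> y" shows "real_capacity x + real_capacity y \<le> real_capacity (x + y)"
proof -
  have "nat \<lfloor>x / 8\<rfloor> + nat \<lfloor>y / 8\<rfloor> \<le> nat \<lfloor>(x + y) / 8\<rfloor>"
    using le_floor_add[of "x / 8" "y / 8"] assms by (simp add: add_divide_distrib nat_add_distrib[symmetric])
  then show ?thesis unfolding real_capacity_def using capacity_superadd capacity_mono order_trans by blast
qed

lemma real_capacity_pow: "real_capacity (2 ^ (n + 3)) = 2 * 2 ^ n - 1"
proof -
  have "(2::real) ^ (n + 3) / 8 = of_nat (2 ^ n)" by (simp add: power_add)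
  then show ?thesis unfolding real_capacity_def by (simp only: floor_of_nat nat_int capacity_pow)
qed

fun subtree :: "nat \<Rightarrow> nat \<Rightarrow> nat set" where
  "subtree 0 i = {}"
| "subtree (Suc n) i = insert i (subtree n (2 * i) \<union> subtree n (2 * i + 1))"

lemma finite_subtree [simp]: "finite (subtree n i)"
  by (induction n arbitrary: i) auto

lemma subtree_ge: "j \<in> subtree n i \<Longrightarrow> i \<le> j"
  by (induction n arbitrary: i) force+

lemma subtree_ancestor: "j \<in> subtree n i \<Longrightarrow> \<exists>k. j div 2 ^ k = i"
proof (induction n arbitrary: i)
  case (Suc n)
  show ?case
  proof (cases "j = i")
    case False
    then obtain c where "j \<in> subtree n c" and "c div 2 = i" using Suc.prems by auto
    then obtain k where "j div 2 ^ k = c" using Suc.IH by blast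
    then have "j div 2 ^ Suc k = i"
      using \<open>c div 2 = i\<close> by (simp add: div_mult2_eq power_Suc2 del: power_Suc)
    then show ?thesis by blast
  qed (metis div_by_1 power_0)
qed simp

text \<open>Sibling subtrees are disjoint, since the parent chain of a node is unique.\<close>
lemma subtrees_disjoint:
  assumes "0 < i" shows "subtree n (2 * i) \<inter> subtree n (2 * i + 1) = {}"
proof -
  have ancestor_le: "j div 2 ^ k \<le> a div 2" if "j div 2 ^ k' = a" "k' < k" for j a k k' :: nat
  proof -
    have "(2::nat) ^ k = 2 ^ k' * 2 * 2 ^ (k - Suc k')"
      using that(2) by (metis Suc_leI le_add_diff_inverse power_Suc2 power_add)
    then have "j div 2 ^ k = a div 2 div 2 ^ (k - Suc k')"
      using that(1) by (simp add: div_mult2_eq)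
    then show ?thesis by simp
  qed
  have False if "j div 2 ^ k = 2 * i" "j div 2 ^ k' = 2 * i + 1" for j k k'
    using ancestor_le[OF that(1), of k'] ancestor_le[OF that(2), of k] that assms
    by (cases k k' rule: linorder_cases) auto
  then show ?thesis using subtree_ancestor by blast
qed

lemma root_notin_subtrees: "0 < i \<Longrightarrow> i \<notin> subtree n (2 * i) \<union> subtree n (2 * i + 1)"
  using subtree_ge[of i n "2 * i"] subtree_ge[of i n "2 * i + 1"] by auto

lemma card_subtree: "0 < i \<Longrightarrow> card (subtree n i) = 2 ^ n - 1"
proof (induction n arbitrary: i)
  case (Suc n)
  have "card (subtree (Suc n) i) = Suc (card (subtree n (2 * i)) + card (subtree n (2 * i + 1)))"
    using root_notin_subtrees[OF Suc.prems] subtrees_disjoint[OF Suc.prems]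
    by (simp add: card_Un_disjoint)
  also have "\<dots> = 2 ^ Suc n - 1"
  proof -
    have "card (subtree n (2 * i)) = 2 ^ n - 1" "card (subtree n (2 * i + 1)) = 2 ^ n - 1"
      using Suc by simp_all
    moreover have "(1::nat) \<le> 2 ^ n" and "(2::nat) ^ Suc n = 2 * 2 ^ n" by simp_all
    ultimately show ?thesis by linarith
  qed
  finally show ?case .
qed simp

lemma sum_subtree_Suc:
  assumes "0 < i"
  shows "(\<Sum>j\<in>subtree (Suc n) i. f j) = f i + (\<Sum>j\<in>subtree n (2 * i). f j) + (\<Sum>j\<in>subtree n (2 * i + 1). f j)"
  using root_notin_subtrees[OF assms] subtrees_disjoint[OF assms]
  by (simp add: sum.union_disjoint add.assoc)

abbreviation liab :: "nat \<Rightarrow> real" where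
  "liab \<equiv> pbar tree_nodes tree_L"

lemma mem_tree_nodes: "i \<in> tree_nodes \<longleftrightarrow> 0 < i \<and> i < 1024"
  by (auto simp: tree_nodes_def)

lemma level_eq_floor_log: "0 < i \<Longrightarrow> level i = floor_log i"
  unfolding level_def
proof (rule the_equality)
  assume "0 < i"
  then show "2 ^ floor_log i \<le> i \<and> i < 2 ^ Suc (floor_log i)"
    using floor_log_exp2_le floor_log_exp2_gt by simp
next
  fix s assume "0 < i" "2 ^ s \<le> i \<and> i < 2 ^ Suc s"
  then show "s = floor_log i" by (intro floor_log_eqI[symmetric]) simp_all
qed

lemma level_child: "0 < k div 2 \<Longrightarrow> level k = Suc (level (k div 2))"
  using floor_log_rec[of k] by (simp add: level_eq_floor_log)

lemma level_less_iff:
  assumes "0 < i" shows "level i < k \<longleftrightarrow> i < 2 ^ k"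
proof
  assume "level i < k"
  then have "2 * 2 ^ floor_log i \<le> (2::nat) ^ k"
    using power_increasing[of "Suc (floor_log i)" k "2::nat"] assms by (simp add: level_eq_floor_log)
  then show "i < 2 ^ k" using floor_log_exp2_gt[of i] by linarith
next
  assume "i < 2 ^ k"
  then have "(2::nat) ^ floor_log i < 2 ^ k" using floor_log_exp2_le[OF assms] by linarith
  then show "level i < k" using assms by (simp add: level_eq_floor_log)
qed

lemma tree_L_eq:
  "tree_L i j = (if 0 < i \<and> i < 512 \<and> j div 2 = i then 2 ^ (10 - level i) else 0)"
proof -
  have "i \<in> tree_nodes \<and> level i < 9 \<longleftrightarrow> 0 < i \<and> i < 512"
    using level_less_iff[of i 9] by (auto simp: mem_tree_nodes)
  moreover have "j = 2 * i \<or> j = 2 * i + 1 \<longleftrightarrow> j div 2 = i" by auto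
  ultimately show ?thesis unfolding tree_L_def by presburger
qed

lemma liab_eq: "liab i = (if 0 < i \<and> i < 512 then 2 * 2 ^ (10 - level i) else 0)"
proof (cases "0 < i \<and> i < 512")
  case True
  then have children: "{j \<in> tree_nodes. j div 2 = i} = {2 * i, 2 * i + 1}"
    by (auto simp: mem_tree_nodes)
  have "liab i = (\<Sum>j\<in>{j \<in> tree_nodes. j div 2 = i}. 2 ^ (10 - level i))"
    unfolding pbar_def tree_L_eq using True
    by (subst sum.inter_filter) (simp_all add: tree_nodes_def)
  then show ?thesis using True by (simp add: children)
qed (auto simp: pbar_def tree_L_eq)

lemma relliab_eq:
  assumes "i \<in> tree_nodes" "j \<in> tree_nodes"
  shows "relliab tree_nodes tree_L j i = (if j = i div 2 then 1 / 2 else 0)"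
proof -
  have "j = i div 2 \<Longrightarrow> j < 512" using assms by (auto simp: mem_tree_nodes)
  then show ?thesis using assms by (auto simp: relliab_def liab_eq tree_L_eq mem_tree_nodes)
qed

lemma inflow_eq:
  assumes "p 0 = 0" "i \<in> tree_nodes"
  shows "(\<Sum>j\<in>tree_nodes. relliab tree_nodes tree_L j i * p j) = p (i div 2) / 2"
proof -
  have "(\<Sum>j\<in>tree_nodes. relliab tree_nodes tree_L j i * p j)
        = (\<Sum>j\<in>tree_nodes. if j = i div 2 then p (i div 2) / 2 else 0)"
    using assms(2) by (intro sum.cong) (simp_all add: relliab_eq)
  also have "\<dots> = p (i div 2) / 2"
    using assms by (subst sum.delta) (auto simp: tree_nodes_def)
  finally show ?thesis .
qed

function pay :: "(nat \<Rightarrow> real) \<Rightarrow> nat \<Rightarrow> real" where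
  "pay c i = (if i \<in> tree_nodes then min (liab i) (pay c (i div 2) / 2 + c i) else 0)"
  by auto
termination
  by (relation "measure snd") (auto simp: mem_tree_nodes)

declare pay.simps [simp del]

text \<open>The root's parent index 0 lies outside the network, so the root receives nothing.\<close>
lemma pay_0 [simp]: "pay c 0 = 0"
  by (simp add: pay.simps mem_tree_nodes)

lemma pay_eq: "i \<in> tree_nodes \<Longrightarrow> pay c i = min (liab i) (pay c (i div 2) / 2 + c i)"
  by (subst pay.simps) simp

lemma pay_is_clearing: "is_clearing tree_nodes tree_L (\<lambda>_. 0) c (pay c)"
  unfolding is_clearing_def by (subst (1 2) pay.simps) (simp add: inflow_eq)

lemma clearing_unique:
  assumes "is_clearing tree_nodes tree_L (\<lambda>_. 0) c p"
  shows "p = pay c"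
proof
  have outside: "p i = 0" if "i \<notin> tree_nodes" for i
    using assms that unfolding is_clearing_def by simp
  have fixpoint: "p i = min (liab i) (p (i div 2) / 2 + c i)" if "i \<in> tree_nodes" for i
  proof -
    have "p i = min (liab i) ((\<Sum>j\<in>tree_nodes. relliab tree_nodes tree_L j i * p j) + 0 + c i)"
      using assms that unfolding is_clearing_def by blast
    then show ?thesis using inflow_eq[OF _ that] outside[of 0] by (simp add: mem_tree_nodes)
  qed
  show "p i = pay c i" for i
  proof (induction i rule: less_induct)
    case (less i)
    show ?case
    proof (cases "i \<in> tree_nodes")
      case True
      then have "i div 2 < i" by (simp add: mem_tree_nodes)
      then show ?thesis using True less fixpoint[OF True] by (subst pay.simps) simp
    qed (simp add: outside pay.simps)
  qed
qed

lemma clearing_vector_eq: "clearing_vector tree_nodes tree_L (\<lambda>_. 0) c = pay c"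
  unfolding clearing_vector_def using pay_is_clearing clearing_unique by blast

lemma pay_nonneg:
  assumes "\<forall>j\<in>tree_nodes. 0 \<le> c j" shows "0 \<le> pay c i"
proof (induction i rule: less_induct)
  case (less i)
  show ?case
  proof (cases "i \<in> tree_nodes")
    case True
    then have "i div 2 < i" by (simp add: mem_tree_nodes)
    then show ?thesis using True less assms by (subst pay.simps) (simp add: liab_eq)
  qed (simp add: pay.simps)
qed

text \<open>at_height n i: node i lies n levels above the leaves, so subtree n i consists of
  the internal nodes below i.\<close>
definition at_height :: "nat \<Rightarrow> nat \<Rightarrow> bool" where
  "at_height n i \<longleftrightarrow> 0 < i \<and> level i + n = 9"

lemma at_height_child: "at_height (Suc n) i \<Longrightarrow> k div 2 = i \<Longrightarrow> at_height n k"
  unfolding at_height_def using level_child[of k] by auto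

lemma at_height_internal: "at_height (Suc n) i \<Longrightarrow> 0 < i \<and> i < 512"
  unfolding at_height_def using level_less_iff[of i 9] by auto

lemma liab_at_height: "at_height (Suc n) i \<Longrightarrow> liab i = 2 ^ (n + 3)"
proof -
  assume h: "at_height (Suc n) i"
  then have "10 - level i = n + 2" by (auto simp: at_height_def)
  then have "liab i = 2 * 2 ^ (n + 2)" using at_height_internal[OF h] by (simp add: liab_eq)
  then show ?thesis by (simp add: power_add)
qed

lemma subtree_internal: "at_height n i \<Longrightarrow> j \<in> subtree n i \<Longrightarrow> 0 < j \<and> j < 512"
proof (induction n arbitrary: i)
  case (Suc n)
  show ?case
  proof (cases "j = i")
    case False
    then obtain k where "j \<in> subtree n k" "k div 2 = i" using Suc.prems(2) by auto
    then show ?thesis using Suc.IH at_height_child[OF Suc.prems(1)] by blast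
  qed (use at_height_internal Suc.prems in blast)
qed simp

lemma subtree_nodes: "at_height n i \<Longrightarrow> subtree n i \<subseteq> tree_nodes"
  using subtree_internal by (fastforce simp: mem_tree_nodes)

lemma at_height_root: "at_height 9 1"
  by (simp add: at_height_def level_eq_floor_log)

lemma internal_nodes: "subtree 9 1 = {1..<512}"
proof (rule card_subset_eq)
  show "subtree 9 1 \<subseteq> {1..<512}" using subtree_internal[OF at_height_root] by fastforce
  show "card (subtree 9 1) = card {1..<512::nat}" using card_subtree[of 1 9] by simp
qed simp

definition num_solvent :: "(nat \<Rightarrow> real) \<Rightarrow> nat set \<Rightarrow> nat" where
  "num_solvent c S = card {j \<in> S. liab j \<le> pay c j}"

lemma num_solvent_le: "0 < i \<Longrightarrow> num_solvent c (subtree n i) \<le> 2 ^ n - 1"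
  unfolding num_solvent_def using card_subtree[of i n] card_mono[of "subtree n i"]
  by (metis (no_types, lifting) finite_subtree mem_Collect_eq subsetI)

lemma num_solvent_Suc:
  assumes "0 < i"
  shows "num_solvent c (subtree (Suc n) i)
         = of_bool (liab i \<le> pay c i) + num_solvent c (subtree n (2 * i))
           + num_solvent c (subtree n (2 * i + 1))"
proof -
  let ?S = "\<lambda>A. {j \<in> A. liab j \<le> pay c j}"
  let ?L = "?S (subtree n (2 * i))" and ?R = "?S (subtree n (2 * i + 1))"
  have "?S {i} = (if liab i \<le> pay c i then {i} else {})" by auto
  then have root: "card (?S {i}) = of_bool (liab i \<le> pay c i)" by simp
  have split: "?S (subtree (Suc n) i) = ?S {i} \<union> (?L \<union> ?R)" by auto
  have "card (?S (subtree (Suc n) i)) = card (?S {i}) + card (?L \<union> ?R)"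
    unfolding split using root_notin_subtrees[OF assms, of n] by (intro card_Un_disjoint) auto
  also have "card (?L \<union> ?R) = card ?L + card ?R"
    using subtrees_disjoint[OF assms, of n] by (intro card_Un_disjoint) auto
  finally show ?thesis using root unfolding num_solvent_def by simp
qed

text \<open>A solvent root makes
  at most the whole subtree solvent, which costs 2^(n+3); an insolvent root passes all its
  funds on, and the children are combined by superadditivity.\<close>
lemma num_solvent_upper_bound:
  assumes c: "\<forall>j\<in>tree_nodes. 0 \<le> c j"
  shows "at_height n i \<Longrightarrow> int (num_solvent c (subtree n i)) \<le> real_capacity (pay c (i div 2) / 2 + (\<Sum>j\<in>subtree n i. c j))"
proof (induction n arbitrary: i)
  case 0
  then show ?case by (simp add: num_solvent_def real_capacity_nonneg)
next
  case (Suc n)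
  have i: "0 < i" "i \<in> tree_nodes" using at_height_internal[OF Suc.prems] by (auto simp: mem_tree_nodes)
  have h1: "at_height n (2 * i)" and h2: "at_height n (2 * i + 1)"
    using at_height_child[OF Suc.prems] by simp_all
  define in\<^sub>i S\<^sub>1 S\<^sub>2 where "in\<^sub>i = pay c (i div 2) / 2"
    and "S\<^sub>1 = (\<Sum>j\<in>subtree n (2 * i). c j)" and "S\<^sub>2 = (\<Sum>j\<in>subtree n (2 * i + 1). c j)"
  have "0 \<le> S\<^sub>1" "0 \<le> S\<^sub>2" "0 \<le> c i" "0 \<le> pay c i"
    unfolding S\<^sub>1_def S\<^sub>2_def using subtree_nodes[OF h1] subtree_nodes[OF h2] c i pay_nonneg[OF c]
    by (auto intro!: sum_nonneg)
  have total: "in\<^sub>i + (\<Sum>j\<in>subtree (Suc n) i. c j) = in\<^sub>i + c i + S\<^sub>1 + S\<^sub>2"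
    unfolding S\<^sub>1_def S\<^sub>2_def sum_subtree_Suc[OF i(1)] by simp
  have pay_i: "pay c i = min (2 ^ (n + 3)) (in\<^sub>i + c i)"
    using pay_eq[OF i(2)] liab_at_height[OF Suc.prems] by (simp add: in\<^sub>i_def)
  show ?case
  proof (cases "liab i \<le> pay c i")
    case True
    have "int (num_solvent c (subtree (Suc n) i)) \<le> int (2 ^ Suc n - 1)"
      using num_solvent_le[OF i(1)] by (rule of_nat_mono)
    also have "\<dots> = 2 * 2 ^ n - 1" by (simp add: of_nat_diff)
    also have "\<dots> = real_capacity (2 ^ (n + 3))" by (rule real_capacity_pow[symmetric])
    also have "\<dots> \<le> real_capacity (in\<^sub>i + (\<Sum>j\<in>subtree (Suc n) i. c j))"
      using True pay_i liab_at_height[OF Suc.prems] \<open>0 \<le> S\<^sub>1\<close> \<open>0 \<le> S\<^sub>2\<close>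
      unfolding total by (intro real_capacity_mono) linarith
    finally show ?thesis by (simp add: in\<^sub>i_def)
  next
    case False
    then have pay_i': "pay c i = in\<^sub>i + c i" using pay_i liab_at_height[OF Suc.prems] by linarith
    have "int (num_solvent c (subtree (Suc n) i))
          = int (num_solvent c (subtree n (2 * i))) + int (num_solvent c (subtree n (2 * i + 1)))"
      using num_solvent_Suc[OF i(1), of c n] False by simp
    also have "\<dots> \<le> real_capacity (pay c i / 2 + S\<^sub>1) + real_capacity (pay c i / 2 + S\<^sub>2)"
      using Suc.IH[OF h1] Suc.IH[OF h2] by (simp add: S\<^sub>1_def S\<^sub>2_def)
    also have "\<dots> \<le> real_capacity (pay c i / 2 + S\<^sub>1 + (pay c i / 2 + S\<^sub>2))"
      using \<open>0 \<le> pay c i\<close> \<open>0 \<le> S\<^sub>1\<close> \<open>0 \<le> S\<^sub>2\<close> by (intro real_capacity_superadd) simp_all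
    also have "pay c i / 2 + S\<^sub>1 + (pay c i / 2 + S\<^sub>2) = in\<^sub>i + (\<Sum>j\<in>subtree (Suc n) i. c j)"
      unfolding total pay_i' by simp
    finally show ?thesis by (simp add: in\<^sub>i_def)
  qed
qed

text \<open>A solvent node passes exactly the liabilities of its children down, so the
  whole subtree below it is solvent.\<close>
lemma solvency_propagates:
  assumes c: "\<forall>j\<in>tree_nodes. 0 \<le> c j"
  shows "at_height n i \<Longrightarrow> liab i \<le> pay c i \<Longrightarrow> j \<in> subtree n i \<Longrightarrow> liab j \<le> pay c j"
proof (induction n arbitrary: i)
  case (Suc n)
  show ?case
  proof (cases "j = i")
    case False
    then obtain k where j: "j \<in> subtree n k" and parent: "k div 2 = i"
      using Suc.prems(3) by auto
    then obtain n' where n: "n = Suc n'" by (cases n) auto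
    have hk: "at_height n k" using at_height_child[OF Suc.prems(1) parent] .
    have k: "k \<in> tree_nodes" using at_height_internal[of n' k] hk n by (simp add: mem_tree_nodes)
    have "liab i = 2 * liab k"
      using liab_at_height[OF Suc.prems(1)] liab_at_height[of n' k] hk n by (simp add: power_add)
    moreover have "0 \<le> c k" using c k by blast
    ultimately have "liab k \<le> pay c k" using Suc.prems(2) pay_eq[OF k, of c] parent by simp
    then show ?thesis using Suc.IH[OF hk] j by simp
  qed (use Suc.prems in simp)
qed simp

text \<open>fund n i m: an injection of total 8m into subtree n i (for 2m \<le> 2^n).  If m = 2^(n-1)
  the root is paid in full, otherwise the budget is split as in capacity_split.\<close>
fun fund :: "nat \<Rightarrow> nat \<Rightarrow> nat \<Rightarrow> nat \<Rightarrow> real" where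
  "fund 0 i m j = 0"
| "fund (Suc n) i m j =
     (if m = 2 ^ n then (if j = i then 2 ^ (n + 3) else 0)
      else fund n (2 * i) (min m (2 ^ n div 2)) j + fund n (2 * i + 1) (m - min m (2 ^ n div 2)) j)"

lemma fund_nonneg: "0 \<le> fund n i m j"
  by (induction n i m j rule: fund.induct) simp_all

lemma fund_outside: "j \<notin> subtree n i \<Longrightarrow> fund n i m j = 0"
  by (induction n i m j rule: fund.induct) auto

lemma fund_total:
  "0 < i \<Longrightarrow> 2 * m \<le> 2 ^ n \<Longrightarrow> (\<Sum>j\<in>subtree n i. fund n i m j) = 8 * real m"
proof (induction n arbitrary: i m)
  case (Suc n)
  show ?case
  proof (cases "m = 2 ^ n")
    case True
    then show ?thesis by (simp add: power_add)
  next
    case False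
    define m\<^sub>1 where "m\<^sub>1 = min m (2 ^ n div 2)"
    have "m < 2 ^ n" using False Suc.prems by simp
    have sum_left: "(\<Sum>j\<in>subtree (Suc n) i. fund n (2 * i) m\<^sub>1 j) = (\<Sum>j\<in>subtree n (2 * i). fund n (2 * i) m\<^sub>1 j)"
      by (intro sum.mono_neutral_right) (auto simp: fund_outside)
    have sum_right: "(\<Sum>j\<in>subtree (Suc n) i. fund n (2 * i + 1) (m - m\<^sub>1) j)
                     = (\<Sum>j\<in>subtree n (2 * i + 1). fund n (2 * i + 1) (m - m\<^sub>1) j)"
      by (intro sum.mono_neutral_right) (auto simp: fund_outside)
    have "2 * m\<^sub>1 \<le> 2 ^ n" "2 * (m - m\<^sub>1) \<le> 2 ^ n"
      using capacity_split(2,3)[OF \<open>m < 2 ^ n\<close>] by (simp_all add: m\<^sub>1_def)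
    have "(\<Sum>j\<in>subtree (Suc n) i. fund (Suc n) i m j)
          = (\<Sum>j\<in>subtree (Suc n) i. fund n (2 * i) m\<^sub>1 j)
            + (\<Sum>j\<in>subtree (Suc n) i. fund n (2 * i + 1) (m - m\<^sub>1) j)"
      using False by (simp add: sum.distrib m\<^sub>1_def del: subtree.simps)
    also have "\<dots> = 8 * real m\<^sub>1 + 8 * real (m - m\<^sub>1)"
      unfolding sum_left sum_right using Suc.IH Suc.prems(1) \<open>2 * m\<^sub>1 \<le> 2 ^ n\<close> \<open>2 * (m - m\<^sub>1) \<le> 2 ^ n\<close>
      by simp
    also have "\<dots> = 8 * real m" by (simp add: m\<^sub>1_def)
    finally show ?thesis .
  qed
qed simp

lemma fund_on_children:
  assumes "0 < i" "m \<noteq> 2 ^ n"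
  shows "j \<in> subtree n (2 * i) \<Longrightarrow> fund (Suc n) i m j = fund n (2 * i) (min m (2 ^ n div 2)) j"
    and "j \<in> subtree n (2 * i + 1) \<Longrightarrow> fund (Suc n) i m j = fund n (2 * i + 1) (m - min m (2 ^ n div 2)) j"
  using subtrees_disjoint[OF assms(1), of n] assms(2) fund_outside[of j n "2 * i"] fund_outside[of j n "2 * i + 1"]
  by auto

lemma fund_makes_solvent:
  assumes c: "\<forall>j\<in>tree_nodes. 0 \<le> c j"
  shows "at_height n i \<Longrightarrow> 2 * m \<le> 2 ^ n \<Longrightarrow> \<forall>j\<in>subtree n i. fund n i m j \<le> c j
         \<Longrightarrow> capacity m \<le> int (num_solvent c (subtree n i))"
proof (induction n arbitrary: i m)
  case 0
  then have "m = 0" by simp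
  then show ?case by simp
next
  case (Suc n)
  have i: "0 < i" "i \<in> tree_nodes" using at_height_internal[OF Suc.prems(1)] by (auto simp: mem_tree_nodes)
  show ?case
  proof (cases "m = 2 ^ n")
    case True
    then have "liab i \<le> c i"
      using Suc.prems(3) liab_at_height[OF Suc.prems(1)] by simp
    moreover have "0 \<le> pay c (i div 2)" using pay_nonneg[OF c] .
    ultimately have "liab i \<le> pay c i" using pay_eq[OF i(2), of c] by simp
    then have "{j \<in> subtree (Suc n) i. liab j \<le> pay c j} = subtree (Suc n) i"
      using solvency_propagates[OF c Suc.prems(1)] by blast
    then have "int (num_solvent c (subtree (Suc n) i)) = 2 * 2 ^ n - 1"
      using card_subtree[OF i(1), of "Suc n"] by (simp add: num_solvent_def of_nat_diff)
    then show ?thesis using capacity_pow True by simp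
  next
    case False
    define m\<^sub>1 where "m\<^sub>1 = min m (2 ^ n div 2)"
    have "m < 2 ^ n" using False Suc.prems(2) by simp
    have "2 * m\<^sub>1 \<le> 2 ^ n" and "2 * (m - m\<^sub>1) \<le> 2 ^ n" and "capacity m = capacity m\<^sub>1 + capacity (m - m\<^sub>1)"
      using capacity_split[OF \<open>m < 2 ^ n\<close>] by (simp_all add: m\<^sub>1_def)
    have h1: "at_height n (2 * i)" and h2: "at_height n (2 * i + 1)"
      using at_height_child[OF Suc.prems(1)] by simp_all
    have "\<forall>j\<in>subtree n (2 * i). fund n (2 * i) m\<^sub>1 j \<le> c j"
      using Suc.prems(3) fund_on_children(1)[OF i(1) False, symmetric] by (auto simp: m\<^sub>1_def simp del: fund.simps)
    then have "capacity m\<^sub>1 \<le> int (num_solvent c (subtree n (2 * i)))"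
      using Suc.IH[OF h1 \<open>2 * m\<^sub>1 \<le> 2 ^ n\<close>] by blast
    moreover have "\<forall>j\<in>subtree n (2 * i + 1). fund n (2 * i + 1) (m - m\<^sub>1) j \<le> c j"
      using Suc.prems(3) fund_on_children(2)[OF i(1) False, symmetric] by (auto simp: m\<^sub>1_def simp del: fund.simps)
    then have "capacity (m - m\<^sub>1) \<le> int (num_solvent c (subtree n (2 * i + 1)))"
      using Suc.IH[OF h2 \<open>2 * (m - m\<^sub>1) \<le> 2 ^ n\<close>] by blast
    ultimately show ?thesis
      using num_solvent_Suc[OF i(1), of c n] \<open>capacity m = capacity m\<^sub>1 + capacity (m - m\<^sub>1)\<close> by simp
  qed
qed

text \<open>Leaves never default, so defaults are the insolvent internal nodes.\<close>
lemma tree_Nd_eq: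
  assumes c: "\<forall>j\<in>tree_nodes. 0 \<le> c j"
  shows "tree_Nd c = 511 - num_solvent c (subtree 9 1)"
proof -
  have leaves_solvent: "liab i \<le> pay c i" if "i \<notin> subtree 9 1" for i
    using that pay_nonneg[OF c, of i] unfolding internal_nodes by (auto simp: liab_eq)
  have "{i \<in> tree_nodes. pay c i < liab i} = subtree 9 1 - {j \<in> subtree 9 1. liab j \<le> pay c j}"
    using subtree_nodes[OF at_height_root] leaves_solvent by fastforce
  then have "tree_Nd c = card (subtree 9 1) - num_solvent c (subtree 9 1)"
    unfolding tree_Nd_def num_defaults_def clearing_vector_eq num_solvent_def
    by (simp add: card_Diff_subset)
  then show ?thesis using card_subtree[of 1 9] by simp
qed

lemma defaults_lower_bound:
  assumes "c \<in> admissible_injections C"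
  shows "511 - real_capacity C \<le> int (tree_Nd c)"
proof -
  have c: "\<forall>j\<in>tree_nodes. 0 \<le> c j" and total: "(\<Sum>j\<in>tree_nodes. c j) = C"
    using assms by (auto simp: admissible_injections_def)
  have "(\<Sum>j\<in>subtree 9 1. c j) \<le> C"
    unfolding total[symmetric] using subtree_nodes[OF at_height_root] c
    by (intro sum_mono2) (auto simp: tree_nodes_def)
  then have "int (num_solvent c (subtree 9 1)) \<le> real_capacity C"
    using num_solvent_upper_bound[OF c at_height_root] real_capacity_mono by fastforce
  then show ?thesis
    using tree_Nd_eq[OF c] num_solvent_le[of 1 c 9] by (simp add: of_nat_diff)
qed

text \<open>Spending 8m through fund (and any remainder r on a leaf) attains 511 - capacity m defaults.\<close>
lemma defaults_achievable:
  assumes "m \<le> 256" "0 \<le> r"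
  shows "\<exists>c\<in>admissible_injections (8 * real m + r). int (tree_Nd c) \<le> 511 - capacity m"
proof -
  define c where "c j = fund 9 1 m j + (if j = 1023 then r else 0)" for j
  have c_nonneg: "\<forall>j\<in>tree_nodes. 0 \<le> c j"
    using fund_nonneg assms(2) by (simp add: c_def)
  have "(\<Sum>j\<in>tree_nodes. fund 9 1 m j) = (\<Sum>j\<in>subtree 9 1. fund 9 1 m j)"
    using subtree_nodes[OF at_height_root] fund_outside
    by (intro sum.mono_neutral_right) (auto simp: tree_nodes_def)
  also have "\<dots> = 8 * real m" using assms(1) by (intro fund_total) simp_all
  finally have "(\<Sum>j\<in>tree_nodes. c j) = 8 * real m + r"
    by (simp add: c_def sum.distrib tree_nodes_def)
  then have admissible: "c \<in> admissible_injections (8 * real m + r)"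
    using c_nonneg by (simp add: admissible_injections_def)
  have "\<forall>j\<in>subtree 9 1. fund 9 1 m j \<le> c j"
    unfolding internal_nodes using assms(2) by (simp add: c_def)
  then have "capacity m \<le> int (num_solvent c (subtree 9 1))"
    using fund_makes_solvent[OF c_nonneg at_height_root] assms(1) by simp
  then have "int (tree_Nd c) \<le> 511 - capacity m"
    using tree_Nd_eq[OF c_nonneg] num_solvent_le[of 1 c 9] by (simp add: of_nat_diff)
  then show ?thesis using admissible by blast
qed

lemma min_defaults_eq:
  assumes "m \<le> 256" "0 \<le> r"
    and lower: "\<And>c. c \<in> admissible_injections (8 * real m + r) \<Longrightarrow> 511 - capacity m \<le> int (tree_Nd c)"
  shows "min_defaults_is (8 * real m + r) (nat (511 - capacity m))"
proof -
  obtain c where c: "c \<in> admissible_injections (8 * real m + r)" "int (tree_Nd c) \<le> 511 - capacity m"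
    using defaults_achievable[OF assms(1,2)] by blast
  then have "tree_Nd c = nat (511 - capacity m)" using lower[OF c(1)] by linarith
  moreover have "nat (511 - capacity m) \<le> tree_Nd c'" if "c' \<in> admissible_injections (8 * real m + r)" for c'
    using lower[OF that] by linarith
  ultimately show ?thesis using c(1) unfolding min_defaults_is_def by blast
qed

lemma binary_formula:
  assumes "C < (2048::nat)"
  shows "(\<Sum>u=3..10. int ((C div 2 ^ u) mod 2) * (2 ^ (u - 2) - 1)) = capacity (C div 8)"
proof -
  have "(\<Sum>u=3..10. int ((C div 2 ^ u) mod 2) * (2 ^ (u - 2) - 1))
        = (\<Sum>k=0..7. int ((C div 2 ^ (k + 3)) mod 2) * (2 ^ (k + 3 - 2) - 1))"
    using sum.shift_bounds_cl_nat_ivl[of "\<lambda>u. int ((C div 2 ^ u) mod 2) * (2 ^ (u - 2) - 1)" 0 3 7]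
    by simp
  also have "\<dots> = (\<Sum>k<8. int ((C div 8) div 2 ^ k mod 2) * (2 ^ (k + 1) - 1))"
  proof -
    have "C div 2 ^ (k + 3) = C div 8 div 2 ^ k" for k
      by (simp add: div_mult2_eq power_add mult.commute)
    moreover have "{0..7::nat} = {..<8}" by auto
    ultimately show ?thesis by simp
  qed
  also have "\<dots> = capacity (C div 8)" using assms by (intro capacity_binary) simp
  finally show ?thesis .
qed

theorem mainTheorem3:
  shows "(\<forall>C::real. C \<ge> 2048 \<longrightarrow>
            min_defaults_is C 0)
       \<and> (\<forall>C::nat. C < 2048 \<longrightarrow>
            min_defaults_is (real C)
              (nat (511 - (\<Sum>u=3..10. int ((C div 2^u) mod 2) * (2^(u-2) - 1)))))"
proof (intro conjI allI impI)
  fix C :: real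
  assume "C \<ge> 2048"
  have capacity_full: "capacity 256 = 511" using capacity_pow[of 8] by simp
  have "min_defaults_is (8 * real 256 + (C - 2048)) (nat (511 - capacity 256))"
    using \<open>C \<ge> 2048\<close> by (intro min_defaults_eq) (simp_all add: capacity_full)
  then show "min_defaults_is C 0" by (simp add: capacity_full)
next
  fix C :: nat
  assume "C < 2048"
  have C_split: "8 * real (C div 8) + real (C mod 8) = real C"
    using of_nat_add[of "8 * (C div 8)" "C mod 8", where 'a = real] by simp
  have "real_capacity (real C) = capacity (C div 8)"
    unfolding real_capacity_def using floor_divide_of_nat_eq[of C 8, where 'a = real] by simp
  then have "min_defaults_is (8 * real (C div 8) + real (C mod 8)) (nat (511 - capacity (C div 8)))"
    using \<open>C < 2048\<close> defaults_lower_bound[of _ "real C"] by (intro min_defaults_eq) (simp_all add: C_split)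
  then show "min_defaults_is (real C) (nat (511 - (\<Sum>u=3..10. int ((C div 2^u) mod 2) * (2^(u-2) - 1))))"
    by (simp add: C_split binary_formula[OF \<open>C < 2048\<close>])
qed

end
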